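(* Let $F$ be a 3SAT(3) formula satisfying the standing assumptions below, with variables $x_1,\dots,x_p$ and clauses $c_1,\dots,c_q$, and let $(G_s,L)$ be the temporal star constructed from $F$ as described below. For every nonnegative integer $\beta$: there exists a truth assignment $\tau$ of $F$ satisfying at least $\beta$ clauses of $F$ if and only if there exists a (partial) exploration $J$ of $(G_s,L)$ of size $|J|\ge 3p+\beta$.
   Context: A temporal star $(G_s,L)$ consists of a star $G_s$ with center $c$ and a map $L$ assigning to each edge a finite set of positive integer labels (times at which the edge is available). A journey is a sequence of time edges $(u,u_1,l_1),(u_1,u_2,l_2),\dots$ (each $l_t$ a label of the edge traversed) with strictly increasing labels $l_1<l_2<\cdots$. A (partial) exploration is a journey starting and ending at $c$; an edge $\{c,v\}$ is explored if the journey enters it from $c$ to $v$ at some label and later exits it from $v$ to $c$ at a strictly larger label; the size $|J|$ of an exploration $J$ is the number of edges (equivalently leaves) it explores. 3SAT(3): a CNF formula with variables $x_1,\dots,x_p$ and clauses $c_1,\dots,c_q$, each clause having at most $3$ literals and each variable appearing in at most $3$ clauses. Standing assumptions on $F$: every variable occurs at least once unnegated and at least once negated; if a variable occurs three times it occurs exactly once negated and twice unnegated, and if it occurs twice it occurs once negated and once unnegated. Construction of $(G_s,L)$ from $F$: the star has the following edges. For each $i=1,\dots,p$: an edge $e_i$ with labels $50i-10,\ 50i-7,\ 50i+10,\ 50i+13$; an edge $e_i'$ with labels $50i,\ 50i+1$; an edge $e_i''$ with labels $50i+15,\ 50i+16$. For each clause $c_j$, $j=1,\dots,q$, an edge $e_{p+j}$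 whose labels are: for every variable $x_i$ appearing unnegated in $c_j$ such that $c_j$ is the first clause (in the order $c_1,\dots,c_q$) containing $x_i$ unnegated, the labels $50i-12,\ 50i-9$; for every variable $x_i$ appearing unnegated in $c_j$ such that an earlier clause already contains $x_i$ unnegated, the labels $50i-8,\ 50i-5$; for every variable $x_i$ appearing negated in $c_j$, the labels $50i+8,\ 50i+11$. *)

theory Defs
  imports Main
begin

text \<open>Vertices of a star with leaf set of type 'e: the centre and one leaf per edge
  (edge {c,v} is identified with its leaf v).\<close>
datatype 'e vtx = Ctr | Lf 'e

type_synonym 'e time_edge = "'e vtx \<times> 'e vtx \<times> nat"

definition time_edge :: "'e set \<Rightarrow> ('e \<Rightarrow> nat set) \<Rightarrow> 'e time_edge \<Rightarrow> bool" where
  "time_edge Es L te \<longleftrightarrow> (case te of (u, w, l) \<Rightarrow>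
     \<exists>e \<in> Es. ((u = Ctr \<and> w = Lf e) \<or> (u = Lf e \<and> w = Ctr)) \<and> l \<in> L e)"

definition journey :: "'e set \<Rightarrow> ('e \<Rightarrow> nat set) \<Rightarrow> 'e time_edge list \<Rightarrow> bool" where
  "journey Es L J \<longleftrightarrow>
     (\<forall>k < length J. time_edge Es L (J ! k)) \<and>
     (\<forall>k. Suc k < length J \<longrightarrow> fst (snd (J ! k)) = fst (J ! Suc k)) \<and>
     (\<forall>k. Suc k < length J \<longrightarrow> snd (snd (J ! k)) < snd (snd (J ! Suc k)))"

definition exploration :: "'e set \<Rightarrow> ('e \<Rightarrow> nat set) \<Rightarrow> 'e time_edge list \<Rightarrow> bool" where
  "exploration Es L J \<longleftrightarrow> journey Es L J \<and>
     (J \<noteq> [] \<longrightarrow> fst (hd J) = Ctr \<and> fst (snd (last J)) = Ctr)"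

definition explored_edges :: "'e set \<Rightarrow> 'e time_edge list \<Rightarrow> 'e set" where
  "explored_edges Es J = {e \<in> Es. \<exists>k m l l'. k < m \<and> m < length J \<and>
       J ! k = (Ctr, Lf e, l) \<and> J ! m = (Lf e, Ctr, l') \<and> l < l'}"

definition expl_size :: "'e set \<Rightarrow> 'e time_edge list \<Rightarrow> nat" where
  "expl_size Es J = card (explored_edges Es J)"

text \<open>A literal is (i, b): variable x_i, unnegated iff b = True.
  A formula is given by p (variables x_1..x_p) and a list of clauses;
  clause c_j is cls ! (j - 1), j = 1..q with q = length cls.\<close>
type_synonym clause = "(nat \<times> bool) set"

definition pos_occ :: "clause list \<Rightarrow> nat \<Rightarrow> nat" where
  "pos_occ cls i = card {j. j < length cls \<and> (i, True) \<in> cls ! j}"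

definition neg_occ :: "clause list \<Rightarrow> nat \<Rightarrow> nat" where
  "neg_occ cls i = card {j. j < length cls \<and> (i, False) \<in> cls ! j}"

definition is_3sat3 :: "nat \<Rightarrow> clause list \<Rightarrow> bool" where
  "is_3sat3 p cls \<longleftrightarrow>
     (\<forall>c \<in> set cls. finite c \<and> card c \<le> 3 \<and> (\<forall>(i, b) \<in> c. 1 \<le> i \<and> i \<le> p)) \<and>
     (\<forall>i \<in> {1..p}. pos_occ cls i + neg_occ cls i \<le> 3)"

definition standing_assms :: "nat \<Rightarrow> clause list \<Rightarrow> bool" where
  "standing_assms p cls \<longleftrightarrow> (\<forall>i \<in> {1..p}.
     pos_occ cls i \<ge> 1 \<and> neg_occ cls i \<ge> 1 \<and>
     (pos_occ cls i + neg_occ cls i = 3 \<longrightarrow> neg_occ cls i = 1 \<and> pos_occ cls i = 2) \<and>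
     (pos_occ cls i + neg_occ cls i = 2 \<longrightarrow> neg_occ cls i = 1 \<and> pos_occ cls i = 1))"

definition sat_clause :: "(nat \<Rightarrow> bool) \<Rightarrow> clause \<Rightarrow> bool" where
  "sat_clause \<tau> c \<longleftrightarrow> (\<exists>(i, b) \<in> c. \<tau> i = b)"

definition num_sat :: "(nat \<Rightarrow> bool) \<Rightarrow> clause list \<Rightarrow> nat" where
  "num_sat \<tau> cls = card {j. j < length cls \<and> sat_clause \<tau> (cls ! j)}"

text \<open>Edge names: EE k is e_k (k = 1..p+q), EE' i is e_i', EE'' i is e_i''.\<close>
datatype sedge = EE nat | EE' nat | EE'' nat

definition star_edges :: "nat \<Rightarrow> clause list \<Rightarrow> sedge set" where
  "star_edges p cls = EE ` {1..p + length cls} \<union> EE' ` {1..p} \<union> EE'' ` {1..p}"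

definition clause_labels :: "nat \<Rightarrow> clause list \<Rightarrow> nat \<Rightarrow> nat \<Rightarrow> nat set" where
  "clause_labels p cls j i =
     (if (i, True) \<in> cls ! (j - 1) then
        (if (\<forall>j'. 1 \<le> j' \<and> j' < j \<longrightarrow> (i, True) \<notin> cls ! (j' - 1))
         then {50*i - 12, 50*i - 9} else {50*i - 8, 50*i - 5})
      else {}) \<union>
     (if (i, False) \<in> cls ! (j - 1) then {50*i + 8, 50*i + 11} else {})"

fun star_labels :: "nat \<Rightarrow> clause list \<Rightarrow> sedge \<Rightarrow> nat set" where
  "star_labels p cls (EE k) =
     (if 1 \<le> k \<and> k \<le> p then {50*k - 10, 50*k - 7, 50*k + 10, 50*k + 13}
      else if p < k \<and> k \<le> p + length cls then
        (\<Union>i \<in> {1..p}. clause_labels p cls (k - p) i)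
      else {})"
| "star_labels p cls (EE' i) = (if 1 \<le> i \<and> i \<le> p then {50*i, 50*i + 1} else {})"
| "star_labels p cls (EE'' i) = (if 1 \<le> i \<and> i \<le> p then {50*i + 15, 50*i + 16} else {})"

end

theory Submission
  imports Defs
begin

text \<open>An exploration of a temporal star amounts to choosing, for each explored leaf, an entry
  label and a larger exit label so that the visit intervals of distinct leaves are disjoint.
  The labels of the construction fall into windows [50 i - 12, 50 i + 16], one per variable x_i.
  Given an assignment, the 3p gadget edges e_i, e_i', e_i'' and the clause edge of every satisfied
  clause get disjoint visits, the clause edge using the labels of one of its true literals and
  e_i its early or late labels according to the value of x_i; since x_i occurs at most twice
  unnegated and once negated, no two clauses compete for the same labels. Conversely, given an
  exploration, let x_i be false iff e_i is visited early. The visit of the clause edge of every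
  unsatisfied clause then makes some gadget edge unexplorable, injectively, so at most
  3p + (number of satisfied clauses) edges are explored.\<close>

section \<open>Explorations as disjoint visit schedules\<close>

definition visit_schedule ::
    "'e set \<Rightarrow> ('e \<Rightarrow> nat set) \<Rightarrow> 'e set \<Rightarrow> ('e \<Rightarrow> nat) \<Rightarrow> ('e \<Rightarrow> nat) \<Rightarrow> bool" where
  "visit_schedule Es L E A B \<longleftrightarrow> E \<subseteq> Es \<and>
     (\<forall>e\<in>E. A e < B e \<and> A e \<in> L e \<and> B e \<in> L e) \<and>
     (\<forall>e\<in>E. \<forall>e'\<in>E. e \<noteq> e' \<longrightarrow> B e < A e' \<or> B e' < A e)"

lemma visit_scheduleD:
  assumes "visit_schedule Es L E A B" "e \<in> E"
  shows "e \<in> Es" "A e < B e" "A e \<in> L e" "B e \<in> L e"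
  using assms unfolding visit_schedule_def by blast+

lemma visit_schedule_disjoint:
  assumes "visit_schedule Es L E A B" "e \<in> E" "e' \<in> E" "e \<noteq> e'"
  shows "B e < A e' \<or> B e' < A e"
  using assms unfolding visit_schedule_def by blast

lemma visit_schedule_subset:
  "visit_schedule Es L E A B \<Longrightarrow> E' \<subseteq> E \<Longrightarrow> visit_schedule Es L E' A B"
  unfolding visit_schedule_def by blast

lemma journey_labels_strict_mono:
  assumes "journey Es L J" "i < j" "j < length J"
  shows "snd (snd (J ! i)) < snd (snd (J ! j))"
  using assms(2,3)
proof (induction j)
  case 0
  then show ?case by simp
next
  case (Suc j)
  have "snd (snd (J ! j)) < snd (snd (J ! Suc j))"
    using assms(1) Suc.prems unfolding journey_def by blast
  moreover have "i = j \<or> i < j" using Suc.prems(1) by linarith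
  ultimately show ?case
    using Suc.IH Suc.prems(2) by fastforce
qed

lemma journey_snoc:
  "journey Es L (xs @ [x]) \<longleftrightarrow> journey Es L xs \<and> time_edge Es L x \<and>
     (xs \<noteq> [] \<longrightarrow> fst (snd (last xs)) = fst x \<and> snd (snd (last xs)) < snd (snd x))"
  unfolding journey_def by (cases xs rule: rev_cases) (auto simp: nth_append less_Suc_eq)

lemma explored_edges_append: "explored_edges Es J \<subseteq> explored_edges Es (J @ J')"
proof
  fix e assume "e \<in> explored_edges Es J"
  then obtain k m l l' where "e \<in> Es" "k < m" "m < length J" "J ! k = (Ctr, Lf e, l)"
    "J ! m = (Lf e, Ctr, l')" "l < l'" unfolding explored_edges_def by blast
  moreover have "(J @ J') ! k = J ! k" "(J @ J') ! m = J ! m"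
    using calculation by (simp_all add: nth_append)
  ultimately show "e \<in> explored_edges Es (J @ J')" unfolding explored_edges_def
    by (metis (mono_tags, lifting) length_append mem_Collect_eq trans_less_add1)
qed

lemma explored_edges_subset: "explored_edges Es J \<subseteq> Es"
  unfolding explored_edges_def by auto

lemma time_edge_leafD:
  "time_edge Es L (Lf e, w, l) \<Longrightarrow> w = Ctr \<and> l \<in> L e \<and> e \<in> Es"
  "time_edge Es L (Ctr, Lf e, l) \<Longrightarrow> l \<in> L e \<and> e \<in> Es"
  unfolding time_edge_def by auto

lemma exploration_visit_schedule:
  assumes "exploration Es L J"
  obtains A B where "visit_schedule Es L (explored_edges Es J) A B"
proof -
  have jr: "journey Es L J" using assms unfolding exploration_def by simp
  let ?visit = "\<lambda>e k. Suc k < length J \<and> fst (J!k) = Ctr \<and> fst (snd (J!k)) = Lf e \<and>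
              fst (J ! Suc k) = Lf e \<and> fst (snd (J ! Suc k)) = Ctr"
  have "\<forall>e\<in>explored_edges Es J. \<exists>k. ?visit e k"
  proof
    fix e assume "e \<in> explored_edges Es J"
    then obtain k m l l' where km: "k < m" "m < length J" "J ! k = (Ctr, Lf e, l)"
      unfolding explored_edges_def by blast
    have sk: "Suc k < length J" using km by simp
    have next_leaf: "fst (J ! Suc k) = Lf e" using jr sk km(3) unfolding journey_def by force
    moreover have "time_edge Es L (J ! Suc k)" using jr sk unfolding journey_def by blast
    ultimately have "fst (snd (J ! Suc k)) = Ctr"
      using time_edge_leafD(1)[of Es L e] by (metis prod.collapse)
    then show "\<exists>k. ?visit e k" using sk km(3) next_leaf by auto
  qed
  then obtain f where f: "\<forall>e\<in>explored_edges Es J. ?visit e (f e)" by metis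
  define A where "A e = snd (snd (J ! f e))" for e
  define B where "B e = snd (snd (J ! Suc (f e)))" for e
  have "A e < B e \<and> A e \<in> L e \<and> B e \<in> L e" if "e \<in> explored_edges Es J" for e
  proof -
    have visit: "?visit e (f e)" using f that by blast
    have "time_edge Es L (J ! f e)" "time_edge Es L (J ! Suc (f e))"
      using jr visit unfolding journey_def by auto
    moreover have "J ! f e = (Ctr, Lf e, A e)" "J ! Suc (f e) = (Lf e, Ctr, B e)"
      using visit A_def B_def by (metis prod.collapse)+
    moreover have "A e < B e"
      using journey_labels_strict_mono[OF jr, of "f e" "Suc (f e)"] visit A_def B_def by simp
    ultimately show ?thesis using time_edge_leafD by metis
  qed
  moreover have "B e < A e' \<or> B e' < A e"
    if "e \<in> explored_edges Es J" "e' \<in> explored_edges Es J" "e \<noteq> e'" for e e'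
  proof -
    have visits: "?visit e (f e)" "?visit e' (f e')" using f that by blast+
    then have "f e \<noteq> f e'" using that(3) by auto
    then consider "f e < f e'" | "f e' < f e" by linarith
    then show ?thesis
    proof cases
      case 1
      then have "Suc (f e) < f e'" using visits by (metis Suc_lessI vtx.distinct(1))
      then show ?thesis
        using journey_labels_strict_mono[OF jr, of "Suc (f e)" "f e'"] visits A_def B_def by simp
    next
      case 2
      then have "Suc (f e') < f e" using visits by (metis Suc_lessI vtx.distinct(1))
      then show ?thesis
        using journey_labels_strict_mono[OF jr, of "Suc (f e')" "f e"] visits A_def B_def by simp
    qed
  qed
  ultimately show thesis using that explored_edges_subset[of Es J] unfolding visit_schedule_def by blast
qed

text \<open>The last conjunct, bounding every label of J by an exit time, is the invariant that lets
  the induction append the visit with the latest entry time.\<close>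

lemma visit_schedule_exploration:
  assumes "finite E" "visit_schedule Es L E A B"
  shows "\<exists>J. exploration Es L J \<and> E \<subseteq> explored_edges Es J \<and>
           (\<forall>t\<in>set J. \<exists>e\<in>E. snd (snd t) \<le> B e)"
  using assms
proof (induction E rule: finite_ranking_induct[where f = A])
  case empty
  show ?case by (auto simp: exploration_def journey_def intro!: exI[of _ "[]"])
next
  case (insert x S)
  show ?case
  proof (cases "x \<in> S")
    case True
    then show ?thesis using insert by (simp add: insert_absorb)
  next
    case False
    note sched = insert.prems
    obtain J where J: "exploration Es L J" "S \<subseteq> explored_edges Es J"
        "\<forall>t\<in>set J. \<exists>e\<in>S. snd (snd t) \<le> B e"
      using insert.IH visit_schedule_subset[OF sched] by blast
    have x: "x \<in> Es" "A x < B x" "A x \<in> L x" "B x \<in> L x"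
      using visit_scheduleD[OF sched] by auto
    have before_x: "B y < A x" if "y \<in> S" for y
      using visit_schedule_disjoint[OF sched, of y x] insert.hyps(2)[OF that] x(2) that False
      by fastforce
    define J' where "J' = J @ [(Ctr, Lf x, A x), (Lf x, Ctr, B x)]"
    have jr: "journey Es L J" using J(1) unfolding exploration_def by simp
    have last_J: "fst (snd (last J)) = Ctr \<and> snd (snd (last J)) < A x" if ne: "J \<noteq> []"
    proof -
      obtain y where "y \<in> S" "snd (snd (last J)) \<le> B y" using J(3) ne by fastforce
      then show ?thesis using before_x J(1) ne unfolding exploration_def by fastforce
    qed
    have "journey Es L (J @ [(Ctr, Lf x, A x)])"
      using journey_snoc[of Es L J] x jr last_J by (auto simp: time_edge_def)
    then have "journey Es L ((J @ [(Ctr, Lf x, A x)]) @ [(Lf x, Ctr, B x)])"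
      using journey_snoc[of Es L "J @ [(Ctr, Lf x, A x)]"] x by (simp add: time_edge_def)
    then have "exploration Es L J'"
      using J(1) unfolding J'_def exploration_def by (cases "J = []") auto
    moreover have "x \<in> explored_edges Es J'"
    proof -
      have "x \<in> Es \<and> length J < Suc (length J) \<and> Suc (length J) < length J' \<and>
          J' ! length J = (Ctr, Lf x, A x) \<and> J' ! Suc (length J) = (Lf x, Ctr, B x) \<and> A x < B x"
        unfolding J'_def using x by (simp add: nth_append)
      then show ?thesis unfolding explored_edges_def by blast
    qed
    moreover have "S \<subseteq> explored_edges Es J'"
      using subset_trans[OF J(2) explored_edges_append] unfolding J'_def .
    moreover have "\<forall>t\<in>set J'. \<exists>e\<in>insert x S. snd (snd t) \<le> B e"
      using J(3) x unfolding J'_def by auto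
    ultimately show ?thesis by blast
  qed
qed

section \<open>Gadget edges and occurrence bounds\<close>

definition gadget_edges :: "nat \<Rightarrow> sedge set" where
  "gadget_edges p = EE ` {1..p} \<union> EE' ` {1..p} \<union> EE'' ` {1..p}"

lemma card_gadget_edges: "card (gadget_edges p) = 3 * p"
proof -
  have "card (EE ` {1..p}) = p" "card (EE' ` {1..p}) = p" "card (EE'' ` {1..p}) = p"
    by (simp_all add: card_image inj_on_def)
  moreover have "EE ` {1..p} \<inter> EE' ` {1..p} = {}"
    "(EE ` {1..p} \<union> EE' ` {1..p}) \<inter> EE'' ` {1..p} = {}"
    by auto
  ultimately show ?thesis unfolding gadget_edges_def by (simp add: card_Un_disjoint)
qed

lemma finite_gadget_edges: "finite (gadget_edges p)"
  unfolding gadget_edges_def by simp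

lemma star_edges_eq: "star_edges p cls = gadget_edges p \<union> EE ` {p+1..p + length cls}"
proof -
  have "{1..p + length cls} = {1..p} \<union> {p+1..p + length cls}" by auto
  then show ?thesis unfolding star_edges_def gadget_edges_def by (simp add: image_Un Un_ac)
qed

lemma finite_star_edges: "finite (star_edges p cls)"
  unfolding star_edges_def by simp

lemma card_clause_indices_shift:
  "card {k. p < k \<and> k \<le> p + n \<and> P (k - p - 1)} = card {j::nat. j < n \<and> P j}"
proof -
  have "bij_betw (\<lambda>j. j + p + 1) {j. j < n \<and> P j} {k. p < k \<and> k \<le> p + n \<and> P (k - p - 1)}"
    by (rule bij_betw_byWitness[where f' = "\<lambda>k. k - p - 1"]) auto
  then show ?thesis by (simp add: bij_betw_same_card)
qed

lemma standing_occ_bounds: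
  assumes "is_3sat3 p cls" "standing_assms p cls" "1 \<le> i" "i \<le> p"
  shows "pos_occ cls i \<le> 2" "neg_occ cls i \<le> 1"
proof -
  have "pos_occ cls i + neg_occ cls i \<le> 3" using assms unfolding is_3sat3_def by auto
  moreover have "pos_occ cls i \<ge> 1 \<and> neg_occ cls i \<ge> 1 \<and>
     (pos_occ cls i + neg_occ cls i = 3 \<longrightarrow> neg_occ cls i = 1 \<and> pos_occ cls i = 2) \<and>
     (pos_occ cls i + neg_occ cls i = 2 \<longrightarrow> neg_occ cls i = 1 \<and> pos_occ cls i = 1)"
    using assms unfolding standing_assms_def by auto
  ultimately show "pos_occ cls i \<le> 2" "neg_occ cls i \<le> 1" by linarith+
qed

lemma neg_occ_le_1_unique:
  assumes "neg_occ cls i \<le> 1" "j1 < length cls" "j2 < length cls"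
    "(i, False) \<in> cls ! j1" "(i, False) \<in> cls ! j2"
  shows "j1 = j2"
proof (rule ccontr)
  assume "j1 \<noteq> j2"
  then have "card {j1, j2} = 2" by simp
  moreover have "card {j1, j2} \<le> neg_occ cls i" unfolding neg_occ_def
    by (rule card_mono) (use assms in auto)
  ultimately show False using assms(1) by simp
qed

lemma pos_occ_le_2_not_three:
  assumes "pos_occ cls i \<le> 2" "j1 < j2" "j2 < j3" "j3 < length cls"
    "(i, True) \<in> cls ! j1" "(i, True) \<in> cls ! j2" "(i, True) \<in> cls ! j3"
  shows False
proof -
  have "card {j1, j2, j3} = 3" using assms(2,3) by simp
  moreover have "card {j1, j2, j3} \<le> pos_occ cls i" unfolding pos_occ_def
    by (rule card_mono) (use assms in auto)
  ultimately show False using assms(1) by simp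
qed

section \<open>From a truth assignment to an exploration\<close>

definition sat_clause_edges :: "nat \<Rightarrow> clause list \<Rightarrow> (nat \<Rightarrow> bool) \<Rightarrow> nat set" where
  "sat_clause_edges p cls \<tau> =
     {k. p < k \<and> k \<le> p + length cls \<and> sat_clause \<tau> (cls ! (k - p - 1))}"

lemma card_sat_clause_edges: "card (sat_clause_edges p cls \<tau>) = num_sat \<tau> cls"
  unfolding sat_clause_edges_def num_sat_def by (rule card_clause_indices_shift)

definition sat_witness :: "nat \<Rightarrow> clause list \<Rightarrow> (nat \<Rightarrow> bool) \<Rightarrow> nat \<Rightarrow> nat \<times> bool" where
  "sat_witness p cls \<tau> k = (SOME x. x \<in> cls ! (k - p - 1) \<and> \<tau> (fst x) = snd x)"

lemma sat_witness_literal: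
  assumes "is_3sat3 p cls" "k \<in> sat_clause_edges p cls \<tau>" "sat_witness p cls \<tau> k = (i, b)"
  shows "(i, b) \<in> cls ! (k - p - 1)" "\<tau> i = b" "1 \<le> i" "i \<le> p"
proof -
  have "\<exists>x. x \<in> cls ! (k - p - 1) \<and> \<tau> (fst x) = snd x"
    using assms(2) unfolding sat_clause_edges_def sat_clause_def by auto
  then have "sat_witness p cls \<tau> k \<in> cls ! (k - p - 1) \<and>
      \<tau> (fst (sat_witness p cls \<tau> k)) = snd (sat_witness p cls \<tau> k)"
    unfolding sat_witness_def by (rule someI_ex)
  then show lit: "(i, b) \<in> cls ! (k - p - 1)" "\<tau> i = b" using assms(3) by simp_all
  have "cls ! (k - p - 1) \<in> set cls" using assms(2) unfolding sat_clause_edges_def by auto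
  then have "\<forall>(i', b') \<in> cls ! (k - p - 1). 1 \<le> i' \<and> i' \<le> p"
    using assms(1) unfolding is_3sat3_def by blast
  then show "1 \<le> i" "i \<le> p" using lit(1) by auto
qed

definition first_pos_occ :: "clause list \<Rightarrow> nat \<Rightarrow> nat \<Rightarrow> bool" where
  "first_pos_occ cls i j \<longleftrightarrow> (\<forall>j'. 1 \<le> j' \<and> j' < j \<longrightarrow> (i, True) \<notin> cls ! (j' - 1))"

text \<open>Relative to 50 w - 12, the offsets 0, 4 and 20 are those of the first unnegated, later
  unnegated and negated labels of a clause edge, 2 and 22 those of the early and late labels of
  e_w, and 12 and 27 those of e_w' and e_w''.\<close>

definition slot_var :: "nat \<Rightarrow> clause list \<Rightarrow> (nat \<Rightarrow> bool) \<Rightarrow> sedge \<Rightarrow> nat" where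
  "slot_var p cls \<tau> e = (case e of
       EE k \<Rightarrow> if k \<le> p then k else fst (sat_witness p cls \<tau> k)
     | EE' i \<Rightarrow> i
     | EE'' i \<Rightarrow> i)"

definition slot_offset :: "nat \<Rightarrow> clause list \<Rightarrow> (nat \<Rightarrow> bool) \<Rightarrow> sedge \<Rightarrow> nat" where
  "slot_offset p cls \<tau> e = (case e of
       EE k \<Rightarrow>
         if k \<le> p then (if \<tau> k then 22 else 2)
         else (case sat_witness p cls \<tau> k of (i, b) \<Rightarrow>
           if b then (if first_pos_occ cls i (k - p) then 0 else 4) else 20)
     | EE' i \<Rightarrow> 12
     | EE'' i \<Rightarrow> 27)"

definition slot_start :: "nat \<Rightarrow> clause list \<Rightarrow> (nat \<Rightarrow> bool) \<Rightarrow> sedge \<Rightarrow> nat" where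
  "slot_start p cls \<tau> e = 50 * slot_var p cls \<tau> e + slot_offset p cls \<tau> e - 12"

definition slot_length :: "nat \<Rightarrow> nat" where
  "slot_length off = (if off \<in> {12, 27} then 1 else 3)"

definition slot_end :: "nat \<Rightarrow> clause list \<Rightarrow> (nat \<Rightarrow> bool) \<Rightarrow> sedge \<Rightarrow> nat" where
  "slot_end p cls \<tau> e = slot_start p cls \<tau> e + slot_length (slot_offset p cls \<tau> e)"

definition assignment_edges :: "nat \<Rightarrow> clause list \<Rightarrow> (nat \<Rightarrow> bool) \<Rightarrow> sedge set" where
  "assignment_edges p cls \<tau> = gadget_edges p \<union> EE ` sat_clause_edges p cls \<tau>"

lemma card_assignment_edges: "card (assignment_edges p cls \<tau>) = 3 * p + num_sat \<tau> cls"
proof -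
  have "gadget_edges p \<inter> EE ` sat_clause_edges p cls \<tau> = {}"
    unfolding gadget_edges_def sat_clause_edges_def by auto
  moreover have "card (EE ` sat_clause_edges p cls \<tau>) = num_sat \<tau> cls"
    by (simp add: card_image inj_on_def card_sat_clause_edges)
  moreover have "finite (sat_clause_edges p cls \<tau>)" unfolding sat_clause_edges_def by simp
  ultimately show ?thesis
    unfolding assignment_edges_def
    by (simp add: card_Un_disjoint finite_gadget_edges card_gadget_edges)
qed

definition consistent_slot :: "(nat \<Rightarrow> bool) \<Rightarrow> nat \<Rightarrow> nat \<Rightarrow> bool" where
  "consistent_slot \<tau> w off \<longleftrightarrow> 1 \<le> w \<and> off \<in> {0, 4, 20, 2, 22, 12, 27} \<and>
     (off \<in> {0, 4, 22} \<longrightarrow> \<tau> w) \<and> (off \<in> {2, 20} \<longrightarrow> \<not> \<tau> w)"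

lemma consistent_slots_disjoint:
  assumes "consistent_slot \<tau> w off" "consistent_slot \<tau> w' off'" "(w, off) \<noteq> (w', off')"
  shows "50 * w + off - 12 + slot_length off < 50 * w' + off' - 12 \<or>
         50 * w' + off' - 12 + slot_length off' < 50 * w + off - 12"
proof -
  have "x + slot_length x \<le> 28" if "consistent_slot \<tau> v x" for v x
    using that unfolding consistent_slot_def slot_length_def
    by (elim conjE insertE emptyE) simp_all
  then have len: "off + slot_length off \<le> 28" "off' + slot_length off' \<le> 28"
    using assms(1,2) by blast+
  have pos: "1 \<le> w" "1 \<le> w'" using assms(1,2) unfolding consistent_slot_def by simp_all
  consider "w < w'" | "w' < w" | "w = w'" by linarith
  then show ?thesis
  proof cases
    case 1
    then show ?thesis using len pos by linarith
  next
    case 2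
    then show ?thesis using len pos by linarith
  next
    case 3
    then have "off + slot_length off < off' \<or> off' + slot_length off' < off"
      using assms unfolding consistent_slot_def slot_length_def
      by (elim conjE insertE emptyE) simp_all
    then show ?thesis using 3 pos by linarith
  qed
qed

lemma assignment_edge_slot:
  assumes "is_3sat3 p cls" "e \<in> assignment_edges p cls \<tau>"
  shows "slot_var p cls \<tau> e \<le> p" "consistent_slot \<tau> (slot_var p cls \<tau> e) (slot_offset p cls \<tau> e)"
proof -
  have "slot_var p cls \<tau> e \<le> p \<and> consistent_slot \<tau> (slot_var p cls \<tau> e) (slot_offset p cls \<tau> e)"
  proof (cases "e \<in> gadget_edges p")
    case True
    then show ?thesis
      unfolding gadget_edges_def slot_var_def slot_offset_def consistent_slot_def
      by (auto split: if_splits)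
  next
    case False
    then obtain k where k: "k \<in> sat_clause_edges p cls \<tau>" "e = EE k"
      using assms(2) unfolding assignment_edges_def by blast
    obtain i b where ib: "sat_witness p cls \<tau> k = (i, b)" by fastforce
    have "p < k" using k(1) unfolding sat_clause_edges_def by simp
    then show ?thesis
      using sat_witness_literal[OF assms(1) k(1) ib] ib k(2)
      unfolding slot_var_def slot_offset_def consistent_slot_def by auto
  qed
  then show "slot_var p cls \<tau> e \<le> p" "consistent_slot \<tau> (slot_var p cls \<tau> e) (slot_offset p cls \<tau> e)"
    by simp_all
qed

lemma assignment_edge_slot_labels:
  assumes "is_3sat3 p cls" "e \<in> assignment_edges p cls \<tau>"
  shows "slot_start p cls \<tau> e \<in> star_labels p cls e" "slot_end p cls \<tau> e \<in> star_labels p cls e"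
proof -
  have "{slot_start p cls \<tau> e, slot_end p cls \<tau> e} \<subseteq> star_labels p cls e"
  proof (cases "e \<in> gadget_edges p")
    case True
    then show ?thesis
      unfolding gadget_edges_def slot_start_def slot_end_def slot_var_def slot_offset_def
        slot_length_def
      by (auto split: if_splits)
  next
    case False
    then obtain k where k: "k \<in> sat_clause_edges p cls \<tau>" "e = EE k"
      using assms(2) unfolding assignment_edges_def by blast
    have kp: "p < k" "k \<le> p + length cls" using k(1) unfolding sat_clause_edges_def by auto
    obtain i b where ib: "sat_witness p cls \<tau> k = (i, b)" by fastforce
    note lit = sat_witness_literal[OF assms(1) k(1) ib]
    have "{slot_start p cls \<tau> e, slot_end p cls \<tau> e} \<subseteq> clause_labels p cls (k - p) i"
      using lit(1,3) kp ib unfolding k(2) slot_start_def slot_end_def slot_var_def slot_offset_def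
        slot_length_def clause_labels_def first_pos_occ_def
      by (cases b) auto
    moreover have "clause_labels p cls (k - p) i \<subseteq> star_labels p cls e"
      using kp lit(3,4) k(2) by auto
    ultimately show ?thesis by blast
  qed
  then show "slot_start p cls \<tau> e \<in> star_labels p cls e" "slot_end p cls \<tau> e \<in> star_labels p cls e"
    by simp_all
qed

lemma clause_slots_distinct:
  assumes A3: "is_3sat3 p cls" and SA: "standing_assms p cls"
    and k: "k \<in> sat_clause_edges p cls \<tau>" and k': "k' \<in> sat_clause_edges p cls \<tau>"
    and "k < k'"
  shows "(slot_var p cls \<tau> (EE k), slot_offset p cls \<tau> (EE k)) \<noteq>
         (slot_var p cls \<tau> (EE k'), slot_offset p cls \<tau> (EE k'))"
proof
  assume same: "(slot_var p cls \<tau> (EE k), slot_offset p cls \<tau> (EE k)) =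
                (slot_var p cls \<tau> (EE k'), slot_offset p cls \<tau> (EE k'))"
  have kp: "p < k" "p < k'" "k' \<le> p + length cls"
    using k k' unfolding sat_clause_edges_def by auto
  obtain i b where ib: "sat_witness p cls \<tau> k = (i, b)" by fastforce
  obtain i' b' where ib': "sat_witness p cls \<tau> k' = (i', b')" by fastforce
  have "i' = i" using same kp ib ib' unfolding slot_var_def by simp
  note lit = sat_witness_literal[OF A3 k ib] and lit' = sat_witness_literal[OF A3 k' ib'[unfolded \<open>i' = i\<close>]]
  note occ = standing_occ_bounds[OF A3 SA lit(3,4)]
  have offsets: "(if b then (if first_pos_occ cls i (k - p) then 0 else 4) else 20) =
      (if b' then (if first_pos_occ cls i (k' - p) then 0 else 4) else (20::nat))"
    using same kp ib ib' \<open>i' = i\<close> unfolding slot_offset_def by simp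
  show False
  proof (cases b)
    case False
    then have "\<not> b'" using offsets by (auto split: if_splits)
    then have "k - p - 1 = k' - p - 1"
      using neg_occ_le_1_unique[OF occ(2)] lit(1) lit'(1) False kp \<open>k < k'\<close> by auto
    then show False using kp \<open>k < k'\<close> by linarith
  next
    case True
    then have b': "b'" using offsets by (auto split: if_splits)
    show False
    proof (cases "first_pos_occ cls i (k' - p)")
      case True
      then have "(i, True) \<notin> cls ! (k - p - 1)"
        using kp \<open>k < k'\<close> unfolding first_pos_occ_def
        by (metis diff_less_mono le_add_diff_inverse less_imp_le_nat less_one not_le zero_less_diff)
      then show False using lit(1) \<open>b\<close> by simp
    next
      case False
      then have "\<not> first_pos_occ cls i (k - p)" using offsets \<open>b\<close> b' by (auto split: if_splits)
      then obtain j where j: "1 \<le> j" "j < k - p" "(i, True) \<in> cls ! (j - 1)"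
        unfolding first_pos_occ_def by blast
      have "j - 1 < k - p - 1" "k - p - 1 < k' - p - 1" "k' - p - 1 < length cls"
        using j(1,2) kp \<open>k < k'\<close> by linarith+
      from pos_occ_le_2_not_three[OF occ(1) this] show False
        using j(3) lit(1) lit'(1) \<open>b\<close> b' by simp
    qed
  qed
qed

lemma assignment_slots_distinct:
  assumes A3: "is_3sat3 p cls" and SA: "standing_assms p cls"
    and e: "e \<in> assignment_edges p cls \<tau>" "e' \<in> assignment_edges p cls \<tau>" "e \<noteq> e'"
  shows "(slot_var p cls \<tau> e, slot_offset p cls \<tau> e) \<noteq> (slot_var p cls \<tau> e', slot_offset p cls \<tau> e')"
proof -
  have gadget: "slot_offset p cls \<tau> x \<in> {2, 22, 12, 27}" if "x \<in> gadget_edges p" for x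
    using that unfolding gadget_edges_def slot_offset_def by (auto split: if_splits)
  have clause: "slot_offset p cls \<tau> (EE k) \<in> {0, 4, 20}" if "k \<in> sat_clause_edges p cls \<tau>" for k
    using that unfolding sat_clause_edges_def slot_offset_def by (auto split: prod.split)
  consider (gg) "e \<in> gadget_edges p" "e' \<in> gadget_edges p"
    | (cg) k where "k \<in> sat_clause_edges p cls \<tau>" "e = EE k" "e' \<in> gadget_edges p"
    | (gc) k where "k \<in> sat_clause_edges p cls \<tau>" "e' = EE k" "e \<in> gadget_edges p"
    | (cc) k k' where "k \<in> sat_clause_edges p cls \<tau>" "e = EE k"
        "k' \<in> sat_clause_edges p cls \<tau>" "e' = EE k'"
    using e unfolding assignment_edges_def by blast
  then show ?thesis
  proof cases
    case gg
    then show ?thesis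
      using e(3) unfolding gadget_edges_def slot_var_def slot_offset_def by (auto split: if_splits)
  next
    case (cg k)
    then show ?thesis using gadget[OF cg(3)] clause[OF cg(1)] by auto
  next
    case (gc k)
    then show ?thesis using gadget[OF gc(3)] clause[OF gc(1)] by auto
  next
    case (cc k k')
    then have "k < k' \<or> k' < k" using e(3) by auto
    then show ?thesis
      using clause_slots_distinct[OF A3 SA cc(1,3)] clause_slots_distinct[OF A3 SA cc(3,1)] cc(2,4)
      by auto
  qed
qed

lemma assignment_visit_schedule:
  assumes "is_3sat3 p cls" "standing_assms p cls"
  shows "visit_schedule (star_edges p cls) (star_labels p cls)
           (assignment_edges p cls \<tau>) (slot_start p cls \<tau>) (slot_end p cls \<tau>)"
  unfolding visit_schedule_def
proof (intro conjI ballI impI)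
  show "assignment_edges p cls \<tau> \<subseteq> star_edges p cls"
    using assignment_edge_slot(1)[OF assms(1)]
    unfolding assignment_edges_def star_edges_eq sat_clause_edges_def by auto
next
  fix e assume e: "e \<in> assignment_edges p cls \<tau>"
  show "slot_start p cls \<tau> e < slot_end p cls \<tau> e" unfolding slot_end_def slot_length_def by simp
  show "slot_start p cls \<tau> e \<in> star_labels p cls e" "slot_end p cls \<tau> e \<in> star_labels p cls e"
    using assignment_edge_slot_labels[OF assms(1) e] by simp_all
next
  fix e e' assume "e \<in> assignment_edges p cls \<tau>" "e' \<in> assignment_edges p cls \<tau>" "e \<noteq> e'"
  then show "slot_end p cls \<tau> e < slot_start p cls \<tau> e' \<or> slot_end p cls \<tau> e' < slot_start p cls \<tau> e"
    using consistent_slots_disjoint assignment_edge_slot(2)[OF assms(1)]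
      assignment_slots_distinct[OF assms]
    unfolding slot_start_def slot_end_def by blast
qed

section \<open>From an exploration to a truth assignment\<close>

lemma clause_labels_range:
  assumes "a \<in> clause_labels p cls j i" "1 \<le> i"
  shows "50 * i \<le> a + 12" "a \<le> 50 * i + 11"
  using assms unfolding clause_labels_def by (auto split: if_splits)

lemma clause_labels_pair:
  assumes "a \<in> clause_labels p cls j i" "b \<in> clause_labels p cls j i" "a < b" "1 \<le> i"
  shows "(a = 50*i - 12 \<and> b = 50*i - 9 \<and> (i, True) \<in> cls ! (j - 1)) \<or>
         (a = 50*i - 8 \<and> b = 50*i - 5 \<and> (i, True) \<in> cls ! (j - 1)) \<or>
         (a = 50*i + 8 \<and> b = 50*i + 11 \<and> (i, False) \<in> cls ! (j - 1)) \<or>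
         (a < 50*i \<and> 50*i + 1 < b)"
proof -
  \<comment> \<open>Writing 50 i as c + 12 removes the truncated subtractions from the case analysis.\<close>
  obtain c where c: "50 * i = c + 12" using assms(4) by (intro that[of "50 * i - 12"]) simp
  show ?thesis
    using assms(1-3) unfolding clause_labels_def c
    by (simp split: if_splits) auto
qed

lemma clause_edge_label_pair:
  assumes "p < k" "a < b" "a \<in> star_labels p cls (EE k)" "b \<in> star_labels p cls (EE k)"
  obtains i where "1 \<le> i" "i \<le> p" "50*i \<le> a + 12" "a \<le> 50*i + 11"
    "(a = 50*i - 12 \<and> b = 50*i - 9 \<and> (i, True) \<in> cls ! (k - p - 1)) \<or>
     (a = 50*i - 8 \<and> b = 50*i - 5 \<and> (i, True) \<in> cls ! (k - p - 1)) \<or>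
     (a = 50*i + 8 \<and> b = 50*i + 11 \<and> (i, False) \<in> cls ! (k - p - 1)) \<or>
     (a < 50*i \<and> 50*i + 1 < b) \<or> (a < 50*i + 15 \<and> 50*i + 16 < b)"
proof -
  have "\<exists>i. 1 \<le> i \<and> i \<le> p \<and> l \<in> clause_labels p cls (k - p) i"
    if "l \<in> star_labels p cls (EE k)" for l
    using that assms(1) by (auto split: if_splits)
  then obtain i i' where i: "1 \<le> i" "i \<le> p" "a \<in> clause_labels p cls (k - p) i"
    and i': "1 \<le> i'" "i' \<le> p" "b \<in> clause_labels p cls (k - p) i'"
    using assms(3,4) by blast
  note ra = clause_labels_range[OF i(3,1)] and rb = clause_labels_range[OF i'(3,1)]
  consider "i' = i" | "i < i'" using ra rb assms(2) by linarith
  then show thesis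
  proof cases
    case 1
    then show thesis
      using that[OF i(1,2) ra] clause_labels_pair[OF i(3) _ assms(2) i(1)] i'(3) by blast
  next
    case 2
    then have "a < 50*i + 15 \<and> 50*i + 16 < b" using ra rb by linarith
    then show thesis using that[OF i(1,2) ra] by blast
  qed
qed

lemma gadget_edge_labels:
  shows "l \<in> star_labels p cls (EE i) \<Longrightarrow> 1 \<le> i \<Longrightarrow> i \<le> p \<Longrightarrow>
      l = 50*i - 10 \<or> l = 50*i - 7 \<or> l = 50*i + 10 \<or> l = 50*i + 13"
    and "l \<in> star_labels p cls (EE' i) \<Longrightarrow> l = 50*i \<or> l = 50*i + 1"
    and "l \<in> star_labels p cls (EE'' i) \<Longrightarrow> l = 50*i + 15 \<or> l = 50*i + 16"
  by (auto split: if_splits)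

definition schedule_assignment :: "sedge set \<Rightarrow> (sedge \<Rightarrow> nat) \<Rightarrow> nat \<Rightarrow> bool" where
  "schedule_assignment E A i \<longleftrightarrow> EE i \<notin> E \<or> 50 * i \<le> A (EE i)"

text \<open>A visit [a, b] of the clause edge of an unsatisfied clause makes a gadget edge of
  some variable x_i unexplorable: e_i' or e_i'' if it spans their labels, e_i if it uses the
  negated labels of x_i, and e_i' again if it uses the first unnegated labels, since then e_i is
  visited from 50 i - 7 on, past 50 i + 1. Any clause label a lies in the window
  [50 i - 12, 50 i + 11] of i = (a + 12) div 50.\<close>

definition blocked_gadget :: "nat \<Rightarrow> nat \<Rightarrow> sedge" where
  "blocked_gadget a b = (let i = (a + 12) div 50 in
     if a < 50*i \<and> 50*i + 1 < b then EE' i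
     else if a < 50*i + 15 \<and> 50*i + 16 < b then EE'' i
     else if 50*i \<le> a then EE i else EE' i)"

definition clause_visit_blocks ::
    "sedge set \<Rightarrow> (sedge \<Rightarrow> nat) \<Rightarrow> (sedge \<Rightarrow> nat) \<Rightarrow> nat \<Rightarrow> nat \<Rightarrow> sedge \<Rightarrow> bool" where
  "clause_visit_blocks E A B k i g \<longleftrightarrow>
     (g = EE' i \<and> A (EE k) < 50*i \<and> 50*i + 1 < B (EE k)) \<or>
     (g = EE'' i \<and> A (EE k) < 50*i + 15 \<and> 50*i + 16 < B (EE k)) \<or>
     (g = EE i \<and> A (EE k) = 50*i + 8 \<and> B (EE k) = 50*i + 11) \<or>
     (g = EE' i \<and> A (EE k) = 50*i - 12 \<and> B (EE k) = 50*i - 9 \<and>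
        EE i \<in> E \<and> A (EE i) = 50*i - 7 \<and> 50*i + 10 \<le> B (EE i))"

lemma unsat_clause_visit_blocks_gadget:
  assumes sched: "visit_schedule (star_edges p cls) (star_labels p cls) E A B"
    and k: "p < k" "EE k \<in> E" and unsat: "\<not> sat_clause (schedule_assignment E A) (cls ! (k - p - 1))"
  defines "g \<equiv> blocked_gadget (A (EE k)) (B (EE k))"
  shows "\<exists>i. 1 \<le> i \<and> i \<le> p \<and> g \<notin> E \<and> clause_visit_blocks E A B k i g"
proof -
  define a where "a = A (EE k)"
  define b where "b = B (EE k)"
  have ab: "a < b" "a \<in> star_labels p cls (EE k)" "b \<in> star_labels p cls (EE k)"
    using visit_scheduleD[OF sched k(2)] unfolding a_def b_def by auto
  obtain i where i: "1 \<le> i" "i \<le> p" "50*i \<le> a + 12" "a \<le> 50*i + 11"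
   "(a = 50*i - 12 \<and> b = 50*i - 9 \<and> (i, True) \<in> cls ! (k - p - 1)) \<or>
    (a = 50*i - 8 \<and> b = 50*i - 5 \<and> (i, True) \<in> cls ! (k - p - 1)) \<or>
    (a = 50*i + 8 \<and> b = 50*i + 11 \<and> (i, False) \<in> cls ! (k - p - 1)) \<or>
    (a < 50*i \<and> 50*i + 1 < b) \<or> (a < 50*i + 15 \<and> 50*i + 16 < b)"
    using clause_edge_label_pair[OF k(1) ab] by blast
  have "(a + 12) div 50 = i" using i(3,4) by linarith
  then have g: "g = (if a < 50*i \<and> 50*i + 1 < b then EE' i
     else if a < 50*i + 15 \<and> 50*i + 16 < b then EE'' i
     else if 50*i \<le> a then EE i else EE' i)"
    unfolding g_def blocked_gadget_def Let_def a_def b_def by simp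
  have visit_E: "A e < B e" "A e \<in> star_labels p cls e" "B e \<in> star_labels p cls e"
    "B (EE k) < A e \<or> B e < A (EE k)" if "e \<in> E" "e \<noteq> EE k" for e
    using visit_scheduleD[OF sched that(1)] visit_schedule_disjoint[OF sched k(2) that(1)] that(2)
    by auto
  have EE'_free: "EE' i \<notin> E" if "A e < 50*i" "50*i + 1 < B e" "e \<in> E" for e
  proof
    assume "EE' i \<in> E"
    with visit_E[of "EE' i"] have "A (EE' i) = 50*i" "B (EE' i) = 50*i + 1"
      using gadget_edge_labels(2)[of "A (EE' i)"] gadget_edge_labels(2)[of "B (EE' i)"] by force+
    then show False
      using visit_schedule_disjoint[OF sched that(3) \<open>EE' i \<in> E\<close>] that(1,2) by fastforce
  qed
  have EE''_free: "EE'' i \<notin> E" if "a < 50*i + 15" "50*i + 16 < b"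
  proof
    assume "EE'' i \<in> E"
    with visit_E[of "EE'' i"] have "A (EE'' i) = 50*i + 15" "B (EE'' i) = 50*i + 16"
      using gadget_edge_labels(3)[of "A (EE'' i)"] gadget_edge_labels(3)[of "B (EE'' i)"] by force+
    then show False using visit_E[OF \<open>EE'' i \<in> E\<close>] that unfolding a_def b_def by auto
  qed
  have var_visit: "A (EE i) < B (EE i) \<and>
      (A (EE i) = 50*i - 10 \<or> A (EE i) = 50*i - 7 \<or> A (EE i) = 50*i + 10 \<or> A (EE i) = 50*i + 13) \<and>
      (B (EE i) = 50*i - 10 \<or> B (EE i) = 50*i - 7 \<or> B (EE i) = 50*i + 10 \<or> B (EE i) = 50*i + 13) \<and>
      (b < A (EE i) \<or> B (EE i) < a)" if "EE i \<in> E"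
    using visit_E[OF that] gadget_edge_labels(1)[OF _ i(1,2)] k(1) i(2) unfolding a_def b_def
    by auto
  have false_lit: "schedule_assignment E A j \<noteq> c" if "(j, c) \<in> cls ! (k - p - 1)" for j c
    using unsat that unfolding sat_clause_def by blast
  consider (EE') "a < 50*i \<and> 50*i + 1 < b"
    | (EE'') "\<not> (a < 50*i \<and> 50*i + 1 < b)" "a < 50*i + 15 \<and> 50*i + 16 < b"
    | (neg) "a = 50*i + 8 \<and> b = 50*i + 11 \<and> (i, False) \<in> cls ! (k - p - 1)"
    | (pos) "(a = 50*i - 12 \<and> b = 50*i - 9 \<or> a = 50*i - 8 \<and> b = 50*i - 5) \<and>
        (i, True) \<in> cls ! (k - p - 1)"
    using i(5) by blast
  then show ?thesis
  proof cases
    case EE'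
    then show ?thesis
      using g i(1,2) EE'_free[of "EE k"] k(2) unfolding a_def b_def clause_visit_blocks_def
      by (intro exI[of _ i]) auto
  next
    case EE''
    then show ?thesis
      using g i(1,2) EE''_free unfolding a_def b_def clause_visit_blocks_def
      by (intro exI[of _ i]) auto
  next
    case neg
    then have "schedule_assignment E A i" using false_lit by blast
    have "EE i \<notin> E"
    proof
      assume "EE i \<in> E"
      then have "50*i \<le> A (EE i)" using \<open>schedule_assignment E A i\<close>
        unfolding schedule_assignment_def by simp
      then show False using var_visit[OF \<open>EE i \<in> E\<close>] neg i(1) by linarith
    qed
    then show ?thesis
      using g neg i(1,2) unfolding a_def b_def clause_visit_blocks_def
      by (intro exI[of _ i]) auto
  next
    case pos
    then have "\<not> schedule_assignment E A i" using false_lit by blast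
    then have early: "EE i \<in> E" "A (EE i) < 50*i" unfolding schedule_assignment_def by auto
    have visit_i: "A (EE i) = 50*i - 7" "50*i + 10 \<le> B (EE i)" "a = 50*i - 12" "b = 50*i - 9"
      using var_visit[OF early(1)] early(2) pos i(1) by (elim conjE disjE; simp; linarith)+
    have "EE' i \<notin> E" using EE'_free[of "EE i"] visit_i(1,2) early(1) i(1) by linarith
    then show ?thesis
      using g pos i(1,2) early(1) visit_i unfolding a_def b_def clause_visit_blocks_def
      by (intro exI[of _ i]) auto
  qed
qed

lemma blocked_gadget_inj:
  assumes sched: "visit_schedule (star_edges p cls) (star_labels p cls) E A B"
    and k1: "p < k1" "EE k1 \<in> E" "\<not> sat_clause (schedule_assignment E A) (cls ! (k1 - p - 1))"
    and k2: "p < k2" "EE k2 \<in> E" "\<not> sat_clause (schedule_assignment E A) (cls ! (k2 - p - 1))"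
    and same: "blocked_gadget (A (EE k1)) (B (EE k1)) = blocked_gadget (A (EE k2)) (B (EE k2))"
  shows "k1 = k2"
proof (rule ccontr)
  assume "k1 \<noteq> k2"
  define g where "g = blocked_gadget (A (EE k1)) (B (EE k1))"
  obtain i1 where i1: "1 \<le> i1" "i1 \<le> p" "clause_visit_blocks E A B k1 i1 g"
    using unsat_clause_visit_blocks_gadget[OF sched k1] unfolding g_def by blast
  obtain i2 where i2: "1 \<le> i2" "i2 \<le> p" "clause_visit_blocks E A B k2 i2 g"
    using unsat_clause_visit_blocks_gadget[OF sched k2] unfolding g_def same by blast
  have "B (EE k1) < A (EE k2) \<or> B (EE k2) < A (EE k1)"
    using visit_schedule_disjoint[OF sched k1(2) k2(2)] \<open>k1 \<noteq> k2\<close> by simp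
  moreover have "B (EE k1) < A (EE i2) \<or> B (EE i2) < A (EE k1)" if "EE i2 \<in> E"
    using visit_schedule_disjoint[OF sched k1(2) that] k1(1) i2(2) by simp
  moreover have "B (EE k2) < A (EE i1) \<or> B (EE i1) < A (EE k2)" if "EE i1 \<in> E"
    using visit_schedule_disjoint[OF sched k2(2) that] k2(1) i1(2) by simp
  ultimately show False
    using i1 i2 unfolding clause_visit_blocks_def by (elim disjE conjE; simp; linarith?)
qed

lemma schedule_size_bound:
  assumes sched: "visit_schedule (star_edges p cls) (star_labels p cls) E A B"
  shows "card E \<le> 3 * p + num_sat (schedule_assignment E A) cls"
proof -
  define \<tau> where "\<tau> = schedule_assignment E A"
  define U where "U = {k. p < k \<and> k \<le> p + length cls \<and> EE k \<in> E \<and> \<not> sat_clause \<tau> (cls ! (k - p - 1))}"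
  define charge where "charge k = blocked_gadget (A (EE k)) (B (EE k))" for k
  have E_split: "E \<subseteq> (gadget_edges p \<inter> E) \<union> EE ` U \<union> EE ` sat_clause_edges p cls \<tau>"
  proof
    fix e assume e: "e \<in> E"
    then have "e \<in> gadget_edges p \<or> (\<exists>k. e = EE k \<and> p < k \<and> k \<le> p + length cls)"
      using visit_scheduleD(1)[OF sched] unfolding star_edges_eq by fastforce
    then show "e \<in> (gadget_edges p \<inter> E) \<union> EE ` U \<union> EE ` sat_clause_edges p cls \<tau>"
      using e unfolding U_def sat_clause_edges_def by blast
  qed
  have "inj_on charge U"
    using blocked_gadget_inj[OF sched] unfolding inj_on_def U_def charge_def \<tau>_def by blast
  moreover have "charge ` U \<subseteq> gadget_edges p - E"
  proof
    fix g assume "g \<in> charge ` U"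
    then obtain k where k: "p < k" "EE k \<in> E" "\<not> sat_clause \<tau> (cls ! (k - p - 1))" "g = charge k"
      unfolding U_def by blast
    then obtain i where "1 \<le> i" "i \<le> p" "g \<notin> E" "g = EE' i \<or> g = EE'' i \<or> g = EE i"
      using unsat_clause_visit_blocks_gadget[OF sched k(1,2)]
      unfolding \<tau>_def charge_def clause_visit_blocks_def by blast
    then show "g \<in> gadget_edges p - E" unfolding gadget_edges_def by auto
  qed
  ultimately have "card U \<le> card (gadget_edges p - E)"
    by (simp add: card_inj_on_le finite_gadget_edges)
  also have "\<dots> = 3 * p - card (gadget_edges p \<inter> E)"
    by (simp add: card_Diff_subset_Int card_gadget_edges finite_gadget_edges)
  finally have U_bound: "card (gadget_edges p \<inter> E) + card U \<le> 3 * p"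
    using card_mono[OF finite_gadget_edges Int_lower1, of p E] card_gadget_edges[of p]
    by linarith
  have "finite U" "finite (sat_clause_edges p cls \<tau>)"
    unfolding U_def sat_clause_edges_def by auto
  then have "card E \<le> card ((gadget_edges p \<inter> E) \<union> EE ` U \<union> EE ` sat_clause_edges p cls \<tau>)"
    using E_split by (intro card_mono) (simp_all add: finite_gadget_edges)
  also have "\<dots> \<le> card (gadget_edges p \<inter> E) + card (EE ` U) + card (EE ` sat_clause_edges p cls \<tau>)"
    by (meson add_right_mono card_Un_le order_trans)
  also have "\<dots> \<le> card (gadget_edges p \<inter> E) + card U + num_sat \<tau> cls"
    using card_image_le[OF \<open>finite U\<close>, of EE] card_image_le[OF \<open>finite (sat_clause_edges p cls \<tau>)\<close>, of EE]
      card_sat_clause_edges[of p cls \<tau>] by linarith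
  finally show ?thesis using U_bound unfolding \<tau>_def by linarith
qed

lemma exploration_of_assignment:
  assumes "is_3sat3 p cls" "standing_assms p cls"
  obtains J where "exploration (star_edges p cls) (star_labels p cls) J"
    "3 * p + num_sat \<tau> cls \<le> expl_size (star_edges p cls) J"
proof -
  note sched = assignment_visit_schedule[OF assms, of \<tau>]
  have "finite (assignment_edges p cls \<tau>)"
    using finite_subset[OF _ finite_star_edges] visit_scheduleD(1)[OF sched] by blast
  then obtain J where J: "exploration (star_edges p cls) (star_labels p cls) J"
    "assignment_edges p cls \<tau> \<subseteq> explored_edges (star_edges p cls) J"
    using visit_schedule_exploration[OF _ sched] by blast
  have "finite (explored_edges (star_edges p cls) J)"
    using finite_subset[OF explored_edges_subset finite_star_edges] .
  then have "card (assignment_edges p cls \<tau>) \<le> expl_size (star_edges p cls) J"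
    unfolding expl_size_def using card_mono J(2) by blast
  then show thesis using that[OF J(1)] card_assignment_edges[of p cls \<tau>] by simp
qed

lemma assignment_of_exploration:
  assumes "exploration (star_edges p cls) (star_labels p cls) J"
  shows "\<exists>\<tau>. expl_size (star_edges p cls) J \<le> 3 * p + num_sat \<tau> cls"
proof -
  obtain A B where
    "visit_schedule (star_edges p cls) (star_labels p cls) (explored_edges (star_edges p cls) J) A B"
    using exploration_visit_schedule[OF assms] .
  from schedule_size_bound[OF this] show ?thesis unfolding expl_size_def by blast
qed

theorem lemma2:
  fixes p :: nat and cls :: "clause list" and \<beta> :: nat
  assumes "is_3sat3 p cls"
    and "standing_assms p cls"
  shows "(\<exists>\<tau>. num_sat \<tau> cls \<ge> \<beta>) \<longleftrightarrow>
         (\<exists>J. exploration (star_edges p cls) (star_labels p cls) J \<and>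
              expl_size (star_edges p cls) J \<ge> 3 * p + \<beta>)"
proof
  assume "\<exists>\<tau>. num_sat \<tau> cls \<ge> \<beta>"
  then obtain \<tau> where "\<beta> \<le> num_sat \<tau> cls" by blast
  moreover obtain J where "exploration (star_edges p cls) (star_labels p cls) J"
    "3 * p + num_sat \<tau> cls \<le> expl_size (star_edges p cls) J"
    using exploration_of_assignment[OF assms] .
  ultimately show "\<exists>J. exploration (star_edges p cls) (star_labels p cls) J \<and>
      expl_size (star_edges p cls) J \<ge> 3 * p + \<beta>"
    by auto
next
  assume "\<exists>J. exploration (star_edges p cls) (star_labels p cls) J \<and>
      expl_size (star_edges p cls) J \<ge> 3 * p + \<beta>"
  then obtain J where "exploration (star_edges p cls) (star_labels p cls) J"
    "3 * p + \<beta> \<le> expl_size (star_edges p cls) J" by blast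
  with assignment_of_exploration show "\<exists>\<tau>. num_sat \<tau> cls \<ge> \<beta>"
    using le_trans by fastforce
qed

end
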